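(* Let $s=a_1\cdots a_n$ be a permutation of $[n]$ in one-line form with $s\neq 12\cdots n$, write $\bar s_0=0$ and $\bar s_r=a_r$ for $1\le r\le n$, and let $\bar s=(\bar s_0,\bar s_1,\ldots,\bar s_n)$ as an $(n+1)$-cycle on $[n]^*=\{0,1,\ldots,n\}$. Let $\pi$ be the permutation of $[n]^*$ such that the plane permutation $(\bar s,\pi)$ has diagonal $\bar s\circ\pi^{-1}=p_t^{-1}$, where $p_t=(n,n-1,\ldots,1,0)$ (equivalently $\pi=p_t\bar s$). Then there exist indices $0\le i-1<j<k-1\le l\le n$ such that $$\pi(\bar s_{i-1})=\bar s_{k-1},\qquad \pi(\bar s_l)=\bar s_j.$$
   Context: Permutations are multiplied as composition of maps, $(\sigma\tau)(x)=\sigma(\tau(x))$. A plane permutation on a finite set is a pair $(s,\pi)$ with $s$ a cycle through all elements (written with a fixed starting element) and $\pi$ any permutation; its diagonal is $s\circ\pi^{-1}$. Note $p_t^{-1}=(0,1,2,\ldots,n)$. *)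

theory Defs
  imports "HOL-Combinatorics.Cycles"
begin

(* The cycle (c_0, c_1, ..., c_m) as a permutation: c_r maps to c_{r+1}, c_m to c_0;
   this is cycle_of_list from HOL-Combinatorics (map (cycle_of_list cs) cs = rotate1 cs). *)

definition p_t :: "nat \<Rightarrow> nat \<Rightarrow> nat" where
  "p_t n = cycle_of_list (rev [0..<n+1])"

end

theory Submission
  imports Defs
begin

text \<open>
  Write s r for the r-th entry of the list 0 # as. Since p_t n lowers every positive entry by one,
  \<pi> (s r) = s (r + 1) - 1 for r < n, and \<pi> (s n) = n. Let m be maximal with s r = r for all
  r \<le> m; then v = s (m + 1) > m + 1, and v - 1 = s k for some k > m + 1, so \<pi> (s m) = s k.
  Let s j be the largest entry at a position strictly between m and k. Either s j = n = \<pi> (s n),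
  or s j + 1 = s q for a position q that is neither \<le> m, nor between m and k, nor k (as
  s k < v \<le> s j); hence q > k and \<pi> (s (q - 1)) = s j.
\<close>

lemma cycle_of_list_nth:
  assumes "distinct cs" and "r < length cs"
  shows "cycle_of_list cs (cs ! r) = cs ! (Suc r mod length cs)"
proof -
  have "map (cycle_of_list cs) cs = rotate1 cs"
    using cyclic_rotation[OF assms(1), of 1] by simp
  then have "cycle_of_list cs (cs ! r) = rotate1 cs ! r"
    using assms(2) by (metis nth_map)
  then show ?thesis
    using assms(2) by (simp add: nth_rotate1)
qed

lemma p_t_Suc:
  assumes "x < n"
  shows "p_t n (Suc x) = x"
proof -
  let ?cs = "rev [0..<Suc n]"
  have "?cs ! (n - Suc x) = Suc x" and "?cs ! Suc (n - Suc x) = x"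
    using assms by (simp_all add: rev_nth del: upt_Suc)
  moreover have "cycle_of_list ?cs (?cs ! (n - Suc x)) = ?cs ! Suc (n - Suc x)"
    using cycle_of_list_nth[of ?cs "n - Suc x"] assms by simp
  ultimately show ?thesis
    unfolding p_t_def by simp
qed

lemma p_t_0: "p_t n 0 = n"
proof -
  let ?cs = "rev [0..<Suc n]"
  have "?cs ! n = 0" and "?cs ! 0 = n"
    by (simp_all add: rev_nth del: upt_Suc)
  moreover have "cycle_of_list ?cs (?cs ! n) = ?cs ! 0"
    using cycle_of_list_nth[of ?cs n] by simp
  ultimately show ?thesis
    unfolding p_t_def by simp
qed

context
  fixes n :: nat and sb :: "nat list"
  assumes distinct_sb: "distinct sb" and set_sb: "set sb = {0..n}"
begin

lemma length_sb: "length sb = Suc n"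
  using distinct_card[OF distinct_sb] set_sb by simp

lemma nth_sb_le: "r \<le> n \<Longrightarrow> sb ! r \<le> n"
  using set_sb length_sb by (metis atLeastAtMost_iff le_imp_less_Suc nth_mem)

lemma nth_sb_eq_iff: "r \<le> n \<Longrightarrow> q \<le> n \<Longrightarrow> sb ! r = sb ! q \<longleftrightarrow> r = q"
  using distinct_sb length_sb by (simp add: nth_eq_iff_index_eq)

lemma position_in_sb:
  assumes "y \<le> n"
  obtains q where "q \<le> n" and "sb ! q = y"
proof -
  have "y \<in> set sb"
    using assms set_sb by simp
  then show ?thesis
    using that length_sb by (metis in_set_conv_nth less_Suc_eq_le)
qed

lemma p_t_comp_cycle_of_list_nth:
  assumes "sb ! 0 = 0" and "r < n"
  shows "(p_t n \<circ> cycle_of_list sb) (sb ! r) = sb ! Suc r - 1"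
proof -
  have "sb ! Suc r \<noteq> 0"
    using nth_sb_eq_iff[of "Suc r" 0] assms by simp
  then obtain x where "sb ! Suc r = Suc x" and "x < n"
    using nth_sb_le[of "Suc r"] assms(2) by (cases "sb ! Suc r") auto
  moreover have "cycle_of_list sb (sb ! r) = sb ! Suc r"
    using cycle_of_list_nth[OF distinct_sb, of r] length_sb assms(2) by simp
  ultimately show ?thesis
    by (simp add: p_t_Suc)
qed

lemma p_t_comp_cycle_of_list_last:
  assumes "sb ! 0 = 0"
  shows "(p_t n \<circ> cycle_of_list sb) (sb ! n) = n"
  using cycle_of_list_nth[OF distinct_sb, of n] length_sb assms by (simp add: p_t_0)

lemma identity_prefix_break:
  assumes "sb ! 0 = 0" and "sb \<noteq> [0..<Suc n]"
  obtains m where "m < n" and "\<forall>r\<le>m. sb ! r = r" and "sb ! Suc m \<noteq> Suc m"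
proof -
  obtain r where "r \<le> n" and "sb ! r \<noteq> r"
  proof (rule ccontr)
    assume "\<not> thesis"
    with that have "sb = [0..<Suc n]"
      using length_sb by (intro nth_equalityI) (auto simp: less_Suc_eq_le simp del: upt_Suc)
    with assms(2) show False ..
  qed
  moreover obtain m where "m < r" and "\<forall>i\<le>m. sb ! i = i" and "sb ! Suc m \<noteq> Suc m"
    using ex_least_nat_less[of "\<lambda>r. sb ! r \<noteq> r" r] \<open>sb ! r \<noteq> r\<close> assms(1) by blast
  ultimately show ?thesis
    using that[of m] by simp
qed

lemma partner_of_prefix_break:
  assumes prefix: "\<forall>r\<le>m. sb ! r = r" and "m < n" and break: "sb ! Suc m \<noteq> Suc m"
  obtains k where "Suc m < k" and "k \<le> n" and "sb ! k = sb ! Suc m - 1"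
    and "Suc m < sb ! Suc m"
proof -
  let ?v = "sb ! Suc m"
  have "\<not> ?v \<le> m"
    using prefix nth_sb_eq_iff[of ?v "Suc m"] \<open>m < n\<close> by fastforce
  then have v_gt: "Suc m < ?v"
    using break by simp
  have "?v - 1 \<le> n"
    using nth_sb_le[of "Suc m"] \<open>m < n\<close> by simp
  then obtain k where k: "k \<le> n" "sb ! k = ?v - 1"
    by (rule position_in_sb)
  have "\<not> k \<le> m"
    using prefix k v_gt by fastforce
  moreover have "k \<noteq> Suc m"
    using k v_gt by auto
  ultimately have "Suc m < k"
    by simp
  then show ?thesis
    using that k v_gt by blast
qed

lemma successor_position_beyond:
  assumes "sb ! 0 = 0" and prefix: "\<forall>r\<le>m. sb ! r = r"
    and "m < j" "j < k" "k \<le> n"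
    and max: "\<forall>i. m < i \<and> i < k \<longrightarrow> sb ! i \<le> sb ! j"
    and "sb ! k < sb ! j" and "m < sb ! j"
  obtains l where "k \<le> l" and "l \<le> n" and "(p_t n \<circ> cycle_of_list sb) (sb ! l) = sb ! j"
proof (cases "sb ! j = n")
  case True
  then have "(p_t n \<circ> cycle_of_list sb) (sb ! n) = sb ! j"
    using p_t_comp_cycle_of_list_last[OF assms(1)] by simp
  then show ?thesis
    using that \<open>k \<le> n\<close> by blast
next
  case False
  then have "Suc (sb ! j) \<le> n"
    using nth_sb_le[of j] \<open>j < k\<close> \<open>k \<le> n\<close> by simp
  then obtain q where q: "q \<le> n" "sb ! q = Suc (sb ! j)"
    by (rule position_in_sb)
  have "\<not> q \<le> m"
  proof
    assume "q \<le> m"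
    with prefix have "sb ! q = q"
      by blast
    with q \<open>q \<le> m\<close> \<open>m < sb ! j\<close> show False
      by simp
  qed
  moreover have "\<not> (m < q \<and> q < k)"
    using max[rule_format, of q] q by auto
  moreover have "q \<noteq> k"
    using q \<open>sb ! k < sb ! j\<close> by auto
  ultimately have "k < q"
    by simp
  moreover have "(p_t n \<circ> cycle_of_list sb) (sb ! (q - 1)) = sb ! j"
    using p_t_comp_cycle_of_list_nth[OF assms(1), of "q - 1"] q \<open>k < q\<close> by simp
  ultimately show ?thesis
    using that[of "q - 1"] q by simp
qed

lemma crossing_after_prefix:
  assumes "sb ! 0 = 0" and prefix: "\<forall>r\<le>m. sb ! r = r"
    and "m < n" and "sb ! Suc m \<noteq> Suc m"
  shows "\<exists>j k l. m < j \<and> j < k \<and> k \<le> l \<and> l \<le> n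
           \<and> (p_t n \<circ> cycle_of_list sb) (sb ! m) = sb ! k
           \<and> (p_t n \<circ> cycle_of_list sb) (sb ! l) = sb ! j"
proof -
  obtain k where k: "Suc m < k" "k \<le> n" "sb ! k = sb ! Suc m - 1"
    and v_gt: "Suc m < sb ! Suc m"
    using partner_of_prefix_break[OF prefix assms(3,4)] .
  have first: "(p_t n \<circ> cycle_of_list sb) (sb ! m) = sb ! k"
    using p_t_comp_cycle_of_list_nth[OF assms(1,3)] k by simp
  let ?J = "{m<..<k}"
  obtain j where j: "j \<in> ?J" and "sb ! j = Max ((!) sb ` ?J)"
    using k Max_in[of "(!) sb ` ?J"] by fastforce
  then have max: "\<forall>i. m < i \<and> i < k \<longrightarrow> sb ! i \<le> sb ! j"
    by simp
  have "sb ! Suc m \<le> sb ! j"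
    using max k by simp
  then have "sb ! k < sb ! j" and "m < sb ! j"
    using k(3) v_gt by simp_all
  moreover have "m < j" and "j < k"
    using j by simp_all
  ultimately obtain l where "k \<le> l" "l \<le> n" "(p_t n \<circ> cycle_of_list sb) (sb ! l) = sb ! j"
    using successor_position_beyond[OF assms(1) prefix _ _ k(2) max] by blast
  with first \<open>m < j\<close> \<open>j < k\<close> show ?thesis
    by blast
qed

end

theorem lemma5:
  fixes as :: "nat list" and n :: nat and sb :: "nat list" and \<pi> :: "nat \<Rightarrow> nat"
  assumes "mset as = mset [1..<n+1]"
    and "as \<noteq> [1..<n+1]"
    and "sb = 0 # as"
    and "\<pi> = p_t n \<circ> cycle_of_list sb"
  shows "\<exists>i j k l. 1 \<le> i \<and> 1 \<le> k \<and> i - 1 < j \<and> j < k - 1 \<and> k - 1 \<le> l \<and> l \<le> n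
           \<and> \<pi> (sb ! (i - 1)) = sb ! (k - 1) \<and> \<pi> (sb ! l) = sb ! j"
proof -
  have mset_sb: "mset sb = mset [0..<Suc n]"
    using assms(1,3) by (simp add: upt_conv_Cons del: upt_Suc)
  have distinct: "distinct sb"
    using mset_sb by (metis distinct_upt mset_eq_imp_distinct_iff)
  have set: "set sb = {0..n}"
    using mset_sb by (metis mset_eq_setD atLeastLessThanSuc_atLeastAtMost set_upt)
  have "sb ! 0 = 0" and "sb \<noteq> [0..<Suc n]"
    using assms(2,3) by (simp_all add: upt_conv_Cons del: upt_Suc)
  then obtain m where "m < n" "\<forall>r\<le>m. sb ! r = r" "sb ! Suc m \<noteq> Suc m"
    using identity_prefix_break[OF distinct set] by blast
  then obtain j k l where crossing: "m < j" "j < k" "k \<le> l" "l \<le> n"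
      "\<pi> (sb ! m) = sb ! k" "\<pi> (sb ! l) = sb ! j"
    using crossing_after_prefix[OF distinct set \<open>sb ! 0 = 0\<close>] assms(4) by blast
  show ?thesis
    by (intro exI[of _ "Suc m"] exI[of _ j] exI[of _ "Suc k"] exI[of _ l]) (simp add: crossing)
qed

end
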